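(* Let $(\mathcal{S},\mathcal{A},r,p)$ be a weakly communicating MDP, $T$ the horizon, $H\ge2$, $\delta\in(0,1)$, and let $(s_t,a_t)_{t=1}^T$ be the state-action sequence generated by Optimistic Q-learning (defined in the context) with parameters $H,\delta$. Let $V^*,Q^*$ be the optimal value and Q-functions of the discounted MDP with discount factor $\gamma=1-1/H$. Then with probability at least $1-\delta$, $$\sum_{t=1}^T\big(Q^*(s_t,a_t)-\gamma V^*(s_t)-r(s_t,a_t)\big)\le 2\,\mathrm{sp}(v^* )\sqrt{2T\ln\tfrac1\delta}+2\,\mathrm{sp}(v^* ).$$
   Context: The MDP has finite state/action sets, known reward $r:\mathcal{S}\times\mathcal{A}\to[0,1]$, unknown kernel $p$; weakly communicating means $\mathcal{S}$ splits into states transient under every stationary policy and a set in which any two states are mutually accessible under some stationary policy. There exist $J^*\in[0,1]$ and $q^*$ with $J^*+q^*(s,a)=r(s,a)+\mathbb{E}_{s'\sim p(\cdot|s,a)}[v^*(s')]$, $v^*(s)=\max_a q^*(s,a)$, and $\mathrm{sp}(v^* )=\max_s v^*(s)-\min_s v^*(s)$. Discounted: $Q^*(s,a)=r(s,a)+\gamma\mathbb{E}_{s'\sim p(\cdot|s,a)}[V^*(s')]$, $V^*(s)=\max_aQ^*(s,a)$. Optimistic Q-learning with parameters $H\ge2,\delta$: $\gamma=1-1/H$, $\hat V_1\equiv H$, $Q_1=\hat Q_1\equiv H$, $n_1\equiv0$, $\alpha_\tau=\frac{H+1}{H+\tau}$, $b_\tau=4\,\mathrm{sp}(v^* )\sqrt{\frac{H}{\tau}\ln\frac{2T}{\delta}}$.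 For $t=1,\dots,T$: from the current state $s_t$ (with $s_1$ arbitrary) take $a_t\in\arg\max_a\hat Q_t(s_t,a)$, observe $s_{t+1}\sim p(\cdot|s_t,a_t)$; set $n_{t+1}(s_t,a_t)=n_t(s_t,a_t)+1$, $\tau=n_{t+1}(s_t,a_t)$, $Q_{t+1}(s_t,a_t)=(1-\alpha_\tau)Q_t(s_t,a_t)+\alpha_\tau[r(s_t,a_t)+\gamma\hat V_t(s_{t+1})+b_\tau]$, $\hat Q_{t+1}(s_t,a_t)=\min\{\hat Q_t(s_t,a_t),Q_{t+1}(s_t,a_t)\}$, $\hat V_{t+1}(s_t)=\max_a\hat Q_{t+1}(s_t,a)$; all other entries unchanged. *)

theory Defs
  imports "HOL-Probability.Probability"
begin

definition pol_kernel :: "('s \<Rightarrow> 'a \<Rightarrow> 's pmf) \<Rightarrow> ('s \<Rightarrow> 'a pmf) \<Rightarrow> 's \<Rightarrow> 's pmf" where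
  "pol_kernel p \<pi> x = bind_pmf (\<pi> x) (\<lambda>a. p x a)"

definition reach :: "('s \<Rightarrow> 'a \<Rightarrow> 's pmf) \<Rightarrow> ('s \<Rightarrow> 'a pmf) \<Rightarrow> ('s \<times> 's) set" where
  "reach p \<pi> = {(x, y). y \<in> set_pmf (pol_kernel p \<pi> x)}\<^sup>*"

definition transient_under :: "('s \<Rightarrow> 'a \<Rightarrow> 's pmf) \<Rightarrow> ('s \<Rightarrow> 'a pmf) \<Rightarrow> 's \<Rightarrow> bool" where
  "transient_under p \<pi> s = (\<exists>y. (s, y) \<in> reach p \<pi> \<and> (y, s) \<notin> reach p \<pi>)"

definition weakly_communicating :: "('s \<Rightarrow> 'a \<Rightarrow> 's pmf) \<Rightarrow> bool" where
  "weakly_communicating p = (\<exists>Tr C. Tr \<inter> C = {} \<and> Tr \<union> C = UNIV \<and>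
      (\<forall>s\<in>Tr. \<forall>\<pi>. transient_under p \<pi> s) \<and>
      (\<forall>x\<in>C. \<forall>y\<in>C. \<exists>\<pi>. (x, y) \<in> reach p \<pi> \<and> (y, x) \<in> reach p \<pi>))"

definition spread :: "('s::finite \<Rightarrow> real) \<Rightarrow> real" where
  "spread v = Max (range v) - Min (range v)"

record ('s, 'a) qstate =
  Qv  :: "'s \<Rightarrow> 'a \<Rightarrow> real"
  Qh  :: "'s \<Rightarrow> 'a \<Rightarrow> real"
  Vh  :: "'s \<Rightarrow> real"
  cnt :: "'s \<Rightarrow> 'a \<Rightarrow> nat"
  cur :: 's
  time :: nat

definition ql_alpha :: "real \<Rightarrow> nat \<Rightarrow> real" where
  "ql_alpha H \<tau> = (H + 1) / (H + real \<tau>)"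

text \<open>Bonus \<open>b_\<tau>\<close>; \<open>spv\<close> is \<open>sp(v*)\<close>.\<close>
definition ql_bonus :: "real \<Rightarrow> real \<Rightarrow> nat \<Rightarrow> real \<Rightarrow> nat \<Rightarrow> real" where
  "ql_bonus spv H T \<delta> \<tau> = 4 * spv * sqrt (H / real \<tau> * ln (2 * real T / \<delta>))"

definition ql_init :: "real \<Rightarrow> 's \<Rightarrow> ('s, 'a) qstate" where
  "ql_init H s1 = \<lparr> Qv = (\<lambda>_ _. H), Qh = (\<lambda>_ _. H), Vh = (\<lambda>_. H),
                   cnt = (\<lambda>_ _. 0), cur = s1, time = 1 \<rparr>"

definition ql_update :: "('s \<Rightarrow> 'a \<Rightarrow> real) \<Rightarrow> real \<Rightarrow> real \<Rightarrow> nat \<Rightarrow> real \<Rightarrow>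
    ('s, 'a::finite) qstate \<Rightarrow> 'a \<Rightarrow> 's \<Rightarrow> ('s, 'a) qstate" where
  "ql_update r spv H T \<delta> \<sigma> a s' =
     (let s = cur \<sigma>; \<gamma> = 1 - 1 / H; \<tau> = cnt \<sigma> s a + 1; \<alpha> = ql_alpha H \<tau>;
          qn = (1 - \<alpha>) * Qv \<sigma> s a + \<alpha> * (r s a + \<gamma> * Vh \<sigma> s' + ql_bonus spv H T \<delta> \<tau>);
          qh' = (Qh \<sigma>)(s := (Qh \<sigma> s)(a := min (Qh \<sigma> s a) qn))
      in \<lparr> Qv = (Qv \<sigma>)(s := (Qv \<sigma> s)(a := qn)),
           Qh = qh',
           Vh = (Vh \<sigma>)(s := Max (range (qh' s))),
           cnt = (cnt \<sigma>)(s := (cnt \<sigma> s)(a := \<tau>)),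
           cur = s',
           time = Suc (time \<sigma>) \<rparr>)"

text \<open>Distribution of the next \<open>k\<close> state-action pairs generated by the algorithm from
  algorithm state \<open>\<sigma>\<close>; \<open>tb\<close> is the (arbitrary) greedy tie-breaking rule.\<close>
fun ql_run :: "('s \<Rightarrow> 'a \<Rightarrow> real) \<Rightarrow> ('s \<Rightarrow> 'a \<Rightarrow> 's pmf) \<Rightarrow> real \<Rightarrow> real \<Rightarrow> nat \<Rightarrow> real \<Rightarrow>
    (('s, 'a::finite) qstate \<Rightarrow> 'a) \<Rightarrow> nat \<Rightarrow> ('s, 'a) qstate \<Rightarrow> ('s \<times> 'a) list pmf" where
  "ql_run r p spv H T \<delta> tb 0 \<sigma> = return_pmf []"
| "ql_run r p spv H T \<delta> tb (Suc k) \<sigma> =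
     bind_pmf (p (cur \<sigma>) (tb \<sigma>)) (\<lambda>s'.
       map_pmf (\<lambda>xs. (cur \<sigma>, tb \<sigma>) # xs)
         (ql_run r p spv H T \<delta> tb k (ql_update r spv H T \<delta> \<sigma> (tb \<sigma>) s')))"

end

theory Submission
  imports Defs
begin

(* Since QS s a - \<gamma> VS s - r s a = \<gamma> (E[VS(s') | s, a] - VS s), the sum along the trajectory
   telescopes into the martingale differences E[VS(s_{t+1}) | s_t, a_t] - VS(s_{t+1}) plus a boundary
   term VS(s_{T+1}) - VS(s_1); both have range sp(VS), and Azuma-Hoeffding bounds the martingale.
   The average-reward Bellman equation pins VS - v between J/(1-\<gamma>) - max v and J/(1-\<gamma>) - min v,
   so sp(VS) \<le> 2 sp(v).  The bound holds for every adapted choice of actions. *)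

lemma spread_le_iff:
  fixes W :: "'s::finite \<Rightarrow> real"
  shows "spread W \<le> c \<longleftrightarrow> (\<forall>x y. W x - W y \<le> c)"
proof
  assume "spread W \<le> c"
  moreover have "W x \<le> Max (range W)" "Min (range W) \<le> W y" for x y
    by simp_all
  ultimately show "\<forall>x y. W x - W y \<le> c"
    unfolding spread_def by (meson diff_mono order_trans)
next
  assume "\<forall>x y. W x - W y \<le> c"
  moreover have "Max (range W) \<in> range W" "Min (range W) \<in> range W"
    by (rule Max_in Min_in, simp_all)+
  ultimately show "spread W \<le> c"
    unfolding spread_def by (metis rangeE)
qed

lemma spread_nonneg: "0 \<le> spread (W :: 's::finite \<Rightarrow> real)"
  using spread_le_iff[of W "spread W"] by (metis diff_self order_refl)

lemma Max_range_le_of_contraction: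
  fixes u :: "'s::finite \<Rightarrow> real"
  assumes "\<gamma> < 1" and "\<And>s. u s \<le> (1 - \<gamma>) * b + \<gamma> * Max (range u)"
  shows "Max (range u) \<le> b"
proof -
  have "Max (range u) \<in> range u"
    by (rule Max_in) simp_all
  then obtain s where "u s = Max (range u)"
    by (metis rangeE)
  with assms(2)[of s] have "(1 - \<gamma>) * Max (range u) \<le> (1 - \<gamma>) * b"
    by (simp add: algebra_simps)
  with assms(1) show ?thesis
    by simp
qed

lemma Min_range_ge_of_contraction:
  fixes u :: "'s::finite \<Rightarrow> real"
  assumes "\<gamma> < 1" and "\<And>s. (1 - \<gamma>) * b + \<gamma> * Min (range u) \<le> u s"
  shows "b \<le> Min (range u)"
proof -
  have "Min (range u) \<in> range u"
    by (rule Min_in) simp_all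
  then obtain s where "u s = Min (range u)"
    by (metis rangeE)
  with assms(2)[of s] have "(1 - \<gamma>) * b \<le> (1 - \<gamma>) * Min (range u)"
    by (simp add: algebra_simps)
  with assms(1) show ?thesis
    by simp
qed

context
  fixes r :: "'s::finite \<Rightarrow> 'a::finite \<Rightarrow> real" and p :: "'s \<Rightarrow> 'a \<Rightarrow> 's pmf"
    and J \<gamma> :: real and q QS :: "'s \<Rightarrow> 'a \<Rightarrow> real" and v VS :: "'s \<Rightarrow> real"
  assumes avg_bellman: "\<And>s a. J + q s a = r s a + measure_pmf.expectation (p s a) v"
    and v_def: "\<And>s. v s = Max (range (q s))"
    and \<gamma>: "0 \<le> \<gamma>" "\<gamma> < 1"
    and disc_Q: "\<And>s a. QS s a = r s a + \<gamma> * measure_pmf.expectation (p s a) VS"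
    and disc_V: "\<And>s. VS s = Max (range (QS s))"
begin

lemma discounted_Q_minus_bias_eq:
  "QS s a - v s - J / (1 - \<gamma>)
    = (q s a - v s) - (1 - \<gamma>) * measure_pmf.expectation (p s a) v
      + \<gamma> * measure_pmf.expectation (p s a) (\<lambda>x. VS x - v x - J / (1 - \<gamma>))"
proof -
  define K where "K = J / (1 - \<gamma>)"
  define Eu where "Eu = measure_pmf.expectation (p s a) (\<lambda>x. VS x - v x - K)"
  have Eu: "Eu = measure_pmf.expectation (p s a) VS - measure_pmf.expectation (p s a) v - K"
    by (simp add: Eu_def integrable_measure_pmf_finite)
  have J: "J = (1 - \<gamma>) * K"
    using \<gamma> by (simp add: K_def)
  have r: "r s a = J + q s a - measure_pmf.expectation (p s a) v"
    using avg_bellman[of s a] by simp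
  show ?thesis
    unfolding K_def [symmetric] Eu_def [symmetric] unfolding disc_Q r Eu J by (simp add: algebra_simps)
qed

lemma discounted_value_minus_bias_le: "VS s - v s \<le> J / (1 - \<gamma>) - Min (range v)"
proof -
  define u where "u = (\<lambda>x. VS x - v x - J / (1 - \<gamma>))"
  have "u s \<le> (1 - \<gamma>) * - Min (range v) + \<gamma> * Max (range u)" for s
  proof -
    have "VS s \<in> range (QS s)"
      unfolding disc_V by (rule Max_in) simp_all
    then obtain a where "VS s = QS s a"
      by auto
    moreover have "q s a \<le> v s"
      by (simp add: v_def)
    moreover have "(1 - \<gamma>) * Min (range v) \<le> (1 - \<gamma>) * measure_pmf.expectation (p s a) v"
      using \<gamma> by (intro mult_left_mono measure_pmf.integral_ge_const)
        (auto simp: integrable_measure_pmf_finite)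
    moreover have "\<gamma> * measure_pmf.expectation (p s a) u \<le> \<gamma> * Max (range u)"
      using \<gamma> by (intro mult_left_mono measure_pmf.integral_le_const)
        (auto simp: integrable_measure_pmf_finite)
    moreover have "u s = VS s - v s - J / (1 - \<gamma>)"
      by (simp add: u_def)
    ultimately show ?thesis
      using discounted_Q_minus_bias_eq[of s a, folded u_def] by linarith
  qed
  then have "Max (range u) \<le> - Min (range v)"
    using \<gamma> by (intro Max_range_le_of_contraction)
  moreover have "u s \<le> Max (range u)" and "u s = VS s - v s - J / (1 - \<gamma>)"
    by (simp_all add: u_def)
  ultimately show ?thesis
    by linarith
qed

lemma discounted_value_minus_bias_ge: "J / (1 - \<gamma>) - Max (range v) \<le> VS s - v s"
proof -
  define u where "u = (\<lambda>x. VS x - v x - J / (1 - \<gamma>))"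
  have "(1 - \<gamma>) * - Max (range v) + \<gamma> * Min (range u) \<le> u s" for s
  proof -
    have "v s \<in> range (q s)"
      unfolding v_def by (rule Max_in) simp_all
    then obtain a where "q s a = v s"
      by auto
    moreover have "QS s a \<le> VS s"
      by (simp add: disc_V)
    moreover have "(1 - \<gamma>) * measure_pmf.expectation (p s a) v \<le> (1 - \<gamma>) * Max (range v)"
      using \<gamma> by (intro mult_left_mono measure_pmf.integral_le_const)
        (auto simp: integrable_measure_pmf_finite)
    moreover have "\<gamma> * Min (range u) \<le> \<gamma> * measure_pmf.expectation (p s a) u"
      using \<gamma> by (intro mult_left_mono measure_pmf.integral_ge_const)
        (auto simp: integrable_measure_pmf_finite)
    moreover have "u s = VS s - v s - J / (1 - \<gamma>)"
      by (simp add: u_def)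
    ultimately show ?thesis
      using discounted_Q_minus_bias_eq[of s a, folded u_def] by linarith
  qed
  then have "- Max (range v) \<le> Min (range u)"
    using \<gamma> by (intro Min_range_ge_of_contraction)
  moreover have "Min (range u) \<le> u s" and "u s = VS s - v s - J / (1 - \<gamma>)"
    by (simp_all add: u_def)
  ultimately show ?thesis
    by linarith
qed

lemma spread_discounted_value_le: "spread VS \<le> 2 * spread v"
proof -
  define K where "K = J / (1 - \<gamma>)"
  have "VS x - VS y \<le> 2 * spread v" for x y
  proof -
    have "VS x - v x \<le> K - Min (range v)" and "K - Max (range v) \<le> VS y - v y"
      unfolding K_def by (rule discounted_value_minus_bias_le discounted_value_minus_bias_ge)+
    moreover have "v x - v y \<le> spread v"
      using spread_le_iff by blast
    ultimately show ?thesis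
      unfolding spread_def by argo
  qed
  then show ?thesis
    by (simp add: spread_le_iff)
qed

end

lemma Hoeffdings_lemma_pmf:
  fixes P :: "'b pmf" and W :: "'b \<Rightarrow> real"
  assumes "l > 0" and "\<And>x. lo \<le> W x" and "\<And>x. W x \<le> hi"
  shows "(\<integral>\<^sup>+x. ennreal (exp (l * (measure_pmf.expectation P W - W x))) \<partial>P)
    \<le> ennreal (exp (l\<^sup>2 * (hi - lo)\<^sup>2 / 8))"
proof -
  interpret interval_bounded_random_variable "measure_pmf P" "\<lambda>x. - W x" "- hi" "- lo"
    by unfold_locales (use assms in auto)
  have "- W x - measure_pmf.expectation P (\<lambda>x. - W x) = measure_pmf.expectation P W - W x" for x
    by simp
  moreover have "- lo - - hi = hi - lo"
    by simp
  ultimately show ?thesis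
    using Hoeffdings_lemma_nn_integral[OF \<open>l > 0\<close>] by (simp only:)
qed

definition expected_increment :: "('s \<Rightarrow> 'a \<Rightarrow> 's pmf) \<Rightarrow> ('s \<Rightarrow> real) \<Rightarrow> 's \<Rightarrow> 'a \<Rightarrow> real" where
  "expected_increment p W s a = measure_pmf.expectation (p s a) W - W s"

lemma cur_ql_update [simp]: "cur (ql_update r spv H T \<delta> \<sigma> a s') = s'"
  by (simp add: ql_update_def Let_def)

lemma ql_run_mgf_le:
  assumes "l > 0" and "\<And>x. lo \<le> W x" and "\<And>x. W x \<le> hi"
  shows "(\<integral>\<^sup>+xs. ennreal (exp (l * ((\<Sum>(s, a)\<leftarrow>xs. expected_increment p W s a) + W (cur \<sigma>))))
      \<partial>ql_run r p spv H T \<delta> tb k \<sigma>)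
    \<le> ennreal (exp (real k * (l\<^sup>2 * (hi - lo)\<^sup>2 / 8) + l * hi))"
proof (induction k arbitrary: \<sigma>)
  case 0
  then show ?case
    using assms by (simp add: mult_left_mono)
next
  case (Suc k)
  define S where "S xs = (\<Sum>(s, a)\<leftarrow>xs. expected_increment p W s a)" for xs
  define s where "s = cur \<sigma>"
  define a where "a = tb \<sigma>"
  define EW where "EW = measure_pmf.expectation (p s a) W"
  define C where "C = l\<^sup>2 * (hi - lo)\<^sup>2 / 8"
  define K where "K = exp (real k * C + l * hi)"
  have inner: "(\<integral>\<^sup>+xs. ennreal (exp (l * (S ((s, a) # xs) + W s)))
        \<partial>ql_run r p spv H T \<delta> tb k (ql_update r spv H T \<delta> \<sigma> a s'))
      \<le> ennreal (exp (l * (EW - W s'))) * ennreal K" for s'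
  proof -
    have "l * (S ((s, a) # xs) + W s) = l * (EW - W s') + l * (S xs + W s')" for xs
      by (simp add: S_def EW_def expected_increment_def algebra_simps)
    then have "(\<integral>\<^sup>+xs. ennreal (exp (l * (S ((s, a) # xs) + W s)))
          \<partial>ql_run r p spv H T \<delta> tb k (ql_update r spv H T \<delta> \<sigma> a s'))
        = ennreal (exp (l * (EW - W s')))
          * (\<integral>\<^sup>+xs. ennreal (exp (l * (S xs + W s')))
              \<partial>ql_run r p spv H T \<delta> tb k (ql_update r spv H T \<delta> \<sigma> a s'))"
      by (simp add: exp_add ennreal_mult nn_integral_cmult)
    also have "\<dots> \<le> ennreal (exp (l * (EW - W s'))) * ennreal K"
      using Suc.IH[of "ql_update r spv H T \<delta> \<sigma> a s'"]
      by (intro mult_left_mono) (simp_all add: S_def C_def K_def)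
    finally show ?thesis .
  qed
  have "(\<integral>\<^sup>+xs. ennreal (exp (l * (S xs + W (cur \<sigma>)))) \<partial>ql_run r p spv H T \<delta> tb (Suc k) \<sigma>)
      = (\<integral>\<^sup>+s'. \<integral>\<^sup>+xs. ennreal (exp (l * (S ((s, a) # xs) + W s)))
          \<partial>ql_run r p spv H T \<delta> tb k (ql_update r spv H T \<delta> \<sigma> a s') \<partial>p s a)"
    by (simp add: s_def a_def)
  also have "\<dots> \<le> (\<integral>\<^sup>+s'. ennreal (exp (l * (EW - W s'))) * ennreal K \<partial>p s a)"
    by (intro nn_integral_mono inner)
  also have "\<dots> = (\<integral>\<^sup>+s'. ennreal (exp (l * (EW - W s'))) \<partial>p s a) * ennreal K"
    by (rule nn_integral_multc) simp
  also have "\<dots> \<le> ennreal (exp C) * ennreal K"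
    unfolding EW_def C_def using Hoeffdings_lemma_pmf[OF assms] by (intro mult_right_mono) auto
  also have "\<dots> = ennreal (exp (real (Suc k) * C + l * hi))"
    by (simp add: K_def algebra_simps exp_add ennreal_mult)
  finally show ?case
    by (simp add: S_def C_def)
qed

lemma ql_run_Azuma:
  assumes "\<And>x. lo \<le> W x" and "\<And>x. W x \<le> hi" and "0 \<le> \<epsilon>"
  shows "measure_pmf.prob (ql_run r p spv H T \<delta> tb k \<sigma>)
      {xs. hi + \<epsilon> \<le> (\<Sum>(s, a)\<leftarrow>xs. expected_increment p W s a) + W (cur \<sigma>)}
    \<le> exp (- 2 * \<epsilon>\<^sup>2 / (real k * (hi - lo)\<^sup>2))"
proof (cases "\<epsilon> = 0 \<or> k = 0 \<or> hi = lo")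
  case True
  \<comment> \<open>the bound is then exp 0 = 1, by division by zero when k = 0 or hi = lo\<close>
  then show ?thesis
    by auto
next
  case False
  define R where "R = ql_run r p spv H T \<delta> tb k \<sigma>"
  define X where "X xs = (\<Sum>(s, a)\<leftarrow>xs. expected_increment p W s a) + W (cur \<sigma>)" for xs
  define d where "d = real k * (hi - lo)\<^sup>2"
  define l where "l = 4 * \<epsilon> / d"
  have "d > 0"
    using False by (simp add: d_def)
  then have "l > 0"
    using False assms(3) by (simp add: l_def)
  have "- l * \<epsilon> + l\<^sup>2 * d / 8 = - 2 * \<epsilon>\<^sup>2 / d"
    using \<open>d > 0\<close> by (simp add: l_def field_simps power2_eq_square)
  moreover have "- l * (hi + \<epsilon>) + (real k * (l\<^sup>2 * (hi - lo)\<^sup>2 / 8) + l * hi)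
      = - l * \<epsilon> + l\<^sup>2 * d / 8"
    by (simp add: d_def algebra_simps)
  ultimately have exponent:
    "- l * (hi + \<epsilon>) + (real k * (l\<^sup>2 * (hi - lo)\<^sup>2 / 8) + l * hi) = - 2 * \<epsilon>\<^sup>2 / d"
    by simp
  have "ennreal (measure_pmf.prob R {xs. hi + \<epsilon> \<le> X xs}) = emeasure R {xs \<in> UNIV. hi + \<epsilon> \<le> X xs}"
    by (simp add: measure_pmf.emeasure_eq_measure)
  also have "\<dots> \<le> ennreal (exp (- l * (hi + \<epsilon>))) * (\<integral>\<^sup>+xs. ennreal (exp (l * X xs)) * indicator UNIV xs \<partial>R)"
    using \<open>l > 0\<close> by (intro Chernoff_ineq_nn_integral_ge) simp_all
  also have "\<dots> \<le> ennreal (exp (- l * (hi + \<epsilon>))) * ennreal (exp (real k * (l\<^sup>2 * (hi - lo)\<^sup>2 / 8) + l * hi))"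
    using ql_run_mgf_le[OF \<open>l > 0\<close> assms(1,2)] by (intro mult_left_mono) (simp_all add: R_def X_def)
  also have "\<dots> = ennreal (exp (- l * (hi + \<epsilon>)) * exp (real k * (l\<^sup>2 * (hi - lo)\<^sup>2 / 8) + l * hi))"
    by (rule ennreal_mult [symmetric]) simp_all
  also have "\<dots> = ennreal (exp (- 2 * \<epsilon>\<^sup>2 / d))"
    by (simp only: exp_add [symmetric] exponent)
  finally show ?thesis
    by (simp add: R_def X_def d_def)
qed

lemma ql_run_increment_sum_eq_0:
  assumes "k = 0 \<or> (\<forall>x. W x = c)" and "xs \<in> set_pmf (ql_run r p spv H T \<delta> tb k \<sigma>)"
  shows "(\<Sum>(s, a)\<leftarrow>xs. expected_increment p W s a) = 0"
proof (cases "k = 0")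
  case True
  with assms(2) show ?thesis
    by simp
next
  case False
  with assms(1) have "W = (\<lambda>_. c)"
    by auto
  then show ?thesis
    by (simp add: expected_increment_def split_def)
qed

lemma ql_run_increment_sum_tail_le:
  assumes "\<And>x. lo \<le> W x" and "\<And>x. W x \<le> hi" and "0 < \<eta>" and "\<eta> \<le> 1"
  shows "measure_pmf.prob (ql_run r p spv H T \<delta> tb k \<sigma>)
      {xs. (hi - lo) * sqrt (real k * ln (1 / \<eta>) / 2) + (hi - lo) < (\<Sum>(s, a)\<leftarrow>xs. expected_increment p W s a)}
    \<le> \<eta>"
proof -
  define R where "R = ql_run r p spv H T \<delta> tb k \<sigma>"
  define S where "S xs = (\<Sum>(s, a)\<leftarrow>xs. expected_increment p W s a)" for xs
  define \<epsilon> where "\<epsilon> = (hi - lo) * sqrt (real k * ln (1 / \<eta>) / 2)"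
  have "lo \<le> hi"
    using assms(1,2) order_trans by blast
  moreover have "0 \<le> ln (1 / \<eta>)"
    using assms(3,4) by simp
  ultimately have "0 \<le> \<epsilon>"
    by (simp add: \<epsilon>_def)
  have "measure_pmf.prob R {xs. \<epsilon> + (hi - lo) < S xs} \<le> \<eta>"
  proof (cases "k = 0 \<or> hi = lo")
    case True
    then have "k = 0 \<or> (\<forall>x. W x = lo)"
      using assms(1,2) by (auto intro: antisym)
    then have "S xs = 0" if "xs \<in> set_pmf R" for xs
      using ql_run_increment_sum_eq_0 that unfolding R_def S_def by blast
    then have "measure_pmf.prob R {xs. \<epsilon> + (hi - lo) < S xs} = 0"
      using \<open>0 \<le> \<epsilon>\<close> \<open>lo \<le> hi\<close> by (auto simp: measure_pmf_zero_iff disjnt_def)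
    then show ?thesis
      using assms(3) by simp
  next
    case False
    have "{xs. \<epsilon> + (hi - lo) < S xs} \<subseteq> {xs. hi + \<epsilon> \<le> S xs + W (cur \<sigma>)}"
      using assms(1)[of "cur \<sigma>"] by auto
    then have "measure_pmf.prob R {xs. \<epsilon> + (hi - lo) < S xs}
        \<le> measure_pmf.prob R {xs. hi + \<epsilon> \<le> S xs + W (cur \<sigma>)}"
      by (rule measure_pmf.finite_measure_mono) simp
    also have "\<dots> \<le> exp (- 2 * \<epsilon>\<^sup>2 / (real k * (hi - lo)\<^sup>2))"
      unfolding R_def S_def using assms(1,2) \<open>0 \<le> \<epsilon>\<close> by (rule ql_run_Azuma)
    also have "- 2 * \<epsilon>\<^sup>2 / (real k * (hi - lo)\<^sup>2) = - ln (1 / \<eta>)"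
    proof -
      have "\<epsilon>\<^sup>2 = (hi - lo)\<^sup>2 * (real k * ln (1 / \<eta>) / 2)"
        using \<open>0 \<le> ln (1 / \<eta>)\<close> by (simp add: \<epsilon>_def power_mult_distrib)
      then show ?thesis
        using False by (simp add: field_simps)
    qed
    also have "- ln (1 / \<eta>) = ln \<eta>"
      using assms(3) by (simp add: ln_div)
    finally show ?thesis
      using assms(3) by simp
  qed
  then show ?thesis
    unfolding R_def S_def \<epsilon>_def .
qed

lemma ql_run_increment_sum_le_whp:
  assumes "\<And>x. lo \<le> W x" and "\<And>x. W x \<le> hi" and "0 < \<eta>" and "\<eta> \<le> 1"
  shows "1 - \<eta> \<le> measure_pmf.prob (ql_run r p spv H T \<delta> tb k \<sigma>)
      {xs. (\<Sum>(s, a)\<leftarrow>xs. expected_increment p W s a) \<le> (hi - lo) * sqrt (real k * ln (1 / \<eta>) / 2) + (hi - lo)}"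
proof -
  let ?c = "(hi - lo) * sqrt (real k * ln (1 / \<eta>) / 2) + (hi - lo)"
  let ?S = "\<lambda>xs. (\<Sum>(s, a)\<leftarrow>xs. expected_increment p W s a)"
  let ?R = "ql_run r p spv H T \<delta> tb k \<sigma>"
  have "{xs. ?S xs \<le> ?c} = UNIV - {xs. ?c < ?S xs}"
    by auto
  then have "measure_pmf.prob ?R {xs. ?S xs \<le> ?c} = 1 - measure_pmf.prob ?R {xs. ?c < ?S xs}"
    using measure_pmf.prob_compl[of "{xs. ?c < ?S xs}" ?R] by simp
  moreover have "measure_pmf.prob ?R {xs. ?c < ?S xs} \<le> \<eta>"
    using assms by (rule ql_run_increment_sum_tail_le)
  ultimately show ?thesis
    by linarith
qed

lemma trajectory_gap_sum_eq:
  assumes "\<And>s a. QS s a = r s a + \<gamma> * measure_pmf.expectation (p s a) VS"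
  shows "(\<Sum>(s, a)\<leftarrow>xs. QS s a - \<gamma> * VS s - r s a)
    = \<gamma> * (\<Sum>(s, a)\<leftarrow>xs. expected_increment p VS s a)"
proof -
  have "QS s a - \<gamma> * VS s - r s a = \<gamma> * expected_increment p VS s a" for s a
    by (simp add: assms expected_increment_def algebra_simps)
  then show ?thesis
    by (simp add: split_def sum_list_const_mult)
qed

lemma ql_run_discounted_gap_sum_le_whp:
  fixes VS :: "'s::finite \<Rightarrow> real"
  assumes "0 \<le> \<gamma>" and "\<gamma> \<le> 1"
    and "\<And>s a. QS s a = r s a + \<gamma> * measure_pmf.expectation (p s a) VS"
    and "0 < \<eta>" and "\<eta> \<le> 1"
  shows "1 - \<eta> \<le> measure_pmf.prob (ql_run r p spv H T \<delta> tb k \<sigma>)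
      {xs. (\<Sum>(s, a)\<leftarrow>xs. QS s a - \<gamma> * VS s - r s a)
        \<le> spread VS * sqrt (real k * ln (1 / \<eta>) / 2) + spread VS}"
proof -
  define R where "R = ql_run r p spv H T \<delta> tb k \<sigma>"
  define S where "S xs = (\<Sum>(s, a)\<leftarrow>xs. expected_increment p VS s a)" for xs
  define c where "c = spread VS * sqrt (real k * ln (1 / \<eta>) / 2) + spread VS"
  have "0 \<le> c"
    using spread_nonneg[of VS] assms(4,5) by (simp add: c_def)
  have "1 - \<eta> \<le> measure_pmf.prob R {xs. S xs \<le> c}"
    unfolding R_def S_def c_def spread_def using assms(4,5)
    by (intro ql_run_increment_sum_le_whp) simp_all
  also have "\<dots> \<le> measure_pmf.prob R {xs. (\<Sum>(s, a)\<leftarrow>xs. QS s a - \<gamma> * VS s - r s a) \<le> c}"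
  proof (rule measure_pmf.finite_measure_mono, safe)
    fix xs
    assume "S xs \<le> c"
    moreover have "\<gamma> * S xs \<le> S xs \<or> \<gamma> * S xs \<le> 0"
      using assms(1,2) by (cases "0 \<le> S xs") (simp_all add: mult_left_le_one_le mult_nonneg_nonpos)
    ultimately show "(\<Sum>(s, a)\<leftarrow>xs. QS s a - \<gamma> * VS s - r s a) \<le> c"
      unfolding trajectory_gap_sum_eq[OF assms(3)] S_def using \<open>0 \<le> c\<close> by linarith
  qed simp
  finally show ?thesis
    by (simp add: R_def c_def)
qed

theorem lemma3:
  fixes r :: "'s::finite \<Rightarrow> 'a::finite \<Rightarrow> real"
    and p :: "'s \<Rightarrow> 'a \<Rightarrow> 's pmf"
    and J :: real and q :: "'s \<Rightarrow> 'a \<Rightarrow> real" and v :: "'s \<Rightarrow> real"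
    and QS :: "'s \<Rightarrow> 'a \<Rightarrow> real" and VS :: "'s \<Rightarrow> real"
    and H \<delta> :: real and T :: nat and s1 :: 's
    and tb :: "('s, 'a) qstate \<Rightarrow> 'a"
  assumes r_range: "\<And>s a. 0 \<le> r s a \<and> r s a \<le> 1"
    and wc: "weakly_communicating p"
    and J_range: "0 \<le> J \<and> J \<le> 1"
    and avg_bellman: "\<And>s a. J + q s a = r s a + measure_pmf.expectation (p s a) v"
    and v_def: "\<And>s. v s = Max (range (q s))"
    and H: "H \<ge> 2"
    and \<delta>: "0 < \<delta>" "\<delta> < 1"
    and disc_Q: "\<And>s a. QS s a = r s a + (1 - 1 / H) * measure_pmf.expectation (p s a) VS"
    and disc_V: "\<And>s. VS s = Max (range (QS s))"
    and greedy: "\<And>\<sigma>. Qh \<sigma> (cur \<sigma>) (tb \<sigma>) = Max (range (Qh \<sigma> (cur \<sigma>)))"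
  shows "measure_pmf.prob (ql_run r p (spread v) H T \<delta> tb T (ql_init H s1))
           {xs. (\<Sum>(s, a)\<leftarrow>xs. QS s a - (1 - 1 / H) * VS s - r s a)
                  \<le> 2 * spread v * sqrt (2 * real T * ln (1 / \<delta>)) + 2 * spread v}
         \<ge> 1 - \<delta>"
proof -
  define \<gamma> where "\<gamma> = 1 - 1 / H"
  define L where "L = ln (1 / \<delta>)"
  have \<gamma>: "0 \<le> \<gamma>" "\<gamma> \<le> 1" "\<gamma> < 1"
    using H by (simp_all add: \<gamma>_def)
  have "0 \<le> L"
    using \<delta> by (simp add: L_def)
  have "spread VS \<le> 2 * spread v"
    using avg_bellman v_def \<gamma>(1,3) disc_Q [folded \<gamma>_def] disc_V by (rule spread_discounted_value_le)
  with \<open>0 \<le> L\<close> spread_nonneg[of VS] have bound: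
    "spread VS * sqrt (real T * L / 2) + spread VS \<le> 2 * spread v * sqrt (2 * real T * L) + 2 * spread v"
    by (auto intro!: add_mono mult_mono)
  have "1 - \<delta> \<le> measure_pmf.prob (ql_run r p (spread v) H T \<delta> tb T (ql_init H s1))
      {xs. (\<Sum>(s, a)\<leftarrow>xs. QS s a - \<gamma> * VS s - r s a) \<le> spread VS * sqrt (real T * L / 2) + spread VS}"
    unfolding L_def using \<gamma>(1,2) disc_Q [folded \<gamma>_def] \<delta>
    by (intro ql_run_discounted_gap_sum_le_whp) simp_all
  also have "\<dots> \<le> measure_pmf.prob (ql_run r p (spread v) H T \<delta> tb T (ql_init H s1))
      {xs. (\<Sum>(s, a)\<leftarrow>xs. QS s a - \<gamma> * VS s - r s a) \<le> 2 * spread v * sqrt (2 * real T * L) + 2 * spread v}"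
    using bound by (intro measure_pmf.finite_measure_mono) auto
  finally show ?thesis
    by (simp add: L_def \<gamma>_def)
qed

end
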